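(* Let $\mathbb{K}$ be a field of characteristic $2$, let $(A,\cdot,\{-,-\},(-)^{\{2\}})$ be a weakly restricted Poisson algebra, and let $\mathcal{B}$ be a linear basis of $A$. Then $A$ is a restricted Poisson algebra if and only if $(xy)^{\{2\}}=x^2y^{\{2\}}+y^2x^{\{2\}}+xy\{x,y\}$ holds for every pair $x,y\in\mathcal{B}$.
   Context: $\mathbb{K}$ has characteristic $2$. A Poisson algebra is a commutative associative (not necessarily unital) $\mathbb{K}$-algebra $(A,\cdot)$ with a Lie bracket satisfying $\{ab,c\}=a\{b,c\}+b\{a,c\}$. It is weakly restricted if there is a map $(-)^{\{2\}}:A\to A$ making $(A,\{,\},(-)^{\{2\}})$ a restricted Lie algebra, i.e. $(\lambda x)^{\{2\}}=\lambda^2x^{\{2\}}$, $\mathrm{ad}_{x^{\{2\}}}=\mathrm{ad}_x^2$, $(x+y)^{\{2\}}=x^{\{2\}}+y^{\{2\}}+\{x,y\}$. It is restricted if moreover $(xy)^{\{2\}}=x^2y^{\{2\}}+y^2x^{\{2\}}+xy\{x,y\}$ for all $x,y\in A$. *)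

theory Defs
  imports Main "HOL.Vector_Spaces"
begin

text \<open>A is modelled as a type 'a of class comm_ring (commutative, associative,
  not necessarily unital ring), which is a vector space over the field 'k via
  the scalar multiplication scale, with multiplication compatible with scalars.\<close>

definition comm_algebra :: "('k::field \<Rightarrow> 'a::comm_ring \<Rightarrow> 'a) \<Rightarrow> bool" where
  "comm_algebra scale \<longleftrightarrow>
     vector_space scale \<and>
     (\<forall>c x y. scale c (x * y) = scale c x * y)"

definition lie_algebra :: "('k::field \<Rightarrow> 'a::ab_group_add \<Rightarrow> 'a) \<Rightarrow> ('a \<Rightarrow> 'a \<Rightarrow> 'a) \<Rightarrow> bool" where
  "lie_algebra scale br \<longleftrightarrow>
     vector_space scale \<and>
     (\<forall>x y z. br (x + y) z = br x z + br y z) \<and>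
     (\<forall>x y z. br x (y + z) = br x y + br x z) \<and>
     (\<forall>c x y. br (scale c x) y = scale c (br x y)) \<and>
     (\<forall>c x y. br x (scale c y) = scale c (br x y)) \<and>
     (\<forall>x. br x x = 0) \<and>
     (\<forall>x y z. br x (br y z) + br y (br z x) + br z (br x y) = 0)"

definition poisson_algebra :: "('k::field \<Rightarrow> 'a::comm_ring \<Rightarrow> 'a) \<Rightarrow> ('a \<Rightarrow> 'a \<Rightarrow> 'a) \<Rightarrow> bool" where
  "poisson_algebra scale br \<longleftrightarrow>
     comm_algebra scale \<and> lie_algebra scale br \<and>
     (\<forall>a b c. br (a * b) c = a * br b c + b * br a c)"

text \<open>Restricted Lie algebra in characteristic 2 (ad x = br x).\<close>
definition restricted_lie :: "('k::field \<Rightarrow> 'a::ab_group_add \<Rightarrow> 'a) \<Rightarrow> ('a \<Rightarrow> 'a \<Rightarrow> 'a) \<Rightarrow> ('a \<Rightarrow> 'a) \<Rightarrow> bool" where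
  "restricted_lie scale br sq \<longleftrightarrow>
     lie_algebra scale br \<and>
     (\<forall>c x. sq (scale c x) = scale (c ^ 2) (sq x)) \<and>
     (\<forall>x. br (sq x) = br x \<circ> br x) \<and>
     (\<forall>x y. sq (x + y) = sq x + sq y + br x y)"

definition weakly_restricted_poisson ::
  "('k::field \<Rightarrow> 'a::comm_ring \<Rightarrow> 'a) \<Rightarrow> ('a \<Rightarrow> 'a \<Rightarrow> 'a) \<Rightarrow> ('a \<Rightarrow> 'a) \<Rightarrow> bool" where
  "weakly_restricted_poisson scale br sq \<longleftrightarrow>
     poisson_algebra scale br \<and> restricted_lie scale br sq"

definition restricted_poisson ::
  "('k::field \<Rightarrow> 'a::comm_ring \<Rightarrow> 'a) \<Rightarrow> ('a \<Rightarrow> 'a \<Rightarrow> 'a) \<Rightarrow> ('a \<Rightarrow> 'a) \<Rightarrow> bool" where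
  "restricted_poisson scale br sq \<longleftrightarrow>
     weakly_restricted_poisson scale br sq \<and>
     (\<forall>x y. sq (x * y) = (x * x) * sq y + (y * y) * sq x + x * y * br x y)"

end

theory Submission
  imports Defs
begin

(* Measure the failure of the restricted identity by the defect
     D(x,y) = (xy)^{2} - x^2 y^{2} - y^2 x^{2} - xy{x,y}.
   It satisfies D(cx,y) = c^2 D(x,y), and in characteristic 2 it is symmetric and additive
   in each argument: expanding D(x1 + x2, y) with the additivity of (-)^{2} and the Leibniz
   rule leaves only the cross term 2 x1 x2 y^{2}, which vanishes.  Hence the zero set of D
   in either argument is a subspace, so D vanishes identically as soon as it vanishes on
   pairs of elements of a spanning set. *)

lemma (in vector_space) add_self_eq_0:
  fixes x :: 'b
  assumes "CHAR('a) = 2"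
  shows "x + x = 0"
proof -
  have "x + x = (1 + 1) *s x"
    by (simp only: scale_left_distrib scale_one)
  also have "(1 + 1 :: 'a) = 0"
    using assms of_nat_CHAR[where 'a='a] by simp
  finally show ?thesis
    by simp
qed

lemma (in vector_space) uminus_eq_self:
  fixes x :: 'b
  assumes "CHAR('a) = 2"
  shows "- x = x"
  using add_self_eq_0[OF assms, of x] by (metis add_eq_0_iff2)

lemma lie_algebra_br_antisym:
  assumes "lie_algebra scale br"
  shows "br x y = - br y x"
proof -
  have add: "br (a + b) c = br a c + br b c" "br a (b + c) = br a b + br a c"
    and self: "br a a = 0" for a b c
    using assms by (simp_all add: lie_algebra_def)
  have "0 = br (x + y) (x + y)"
    by (simp add: self)
  also have "\<dots> = br x y + br y x"
    unfolding add by (simp add: self)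
  finally show ?thesis
    by (metis eq_neg_iff_add_eq_0)
qed

definition restriction_defect :: "('a::comm_ring \<Rightarrow> 'a \<Rightarrow> 'a) \<Rightarrow> ('a \<Rightarrow> 'a) \<Rightarrow> 'a \<Rightarrow> 'a \<Rightarrow> 'a" where
  "restriction_defect br sq x y = sq (x * y) - ((x * x) * sq y + (y * y) * sq x + x * y * br x y)"

lemma restriction_defect_eq_0_iff:
  "restriction_defect br sq x y = 0 \<longleftrightarrow> sq (x * y) = (x * x) * sq y + (y * y) * sq x + x * y * br x y"
  by (simp add: restriction_defect_def)

lemma (in vector_space) vanishing_on_span:
  assumes "\<And>y. subspace {x. F x y = 0}" and "\<And>x. subspace {y. F x y = 0}"
    and "\<And>x y. x \<in> B \<Longrightarrow> y \<in> B \<Longrightarrow> F x y = 0"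
    and "x \<in> span B" and "y \<in> span B"
  shows "F x y = 0"
proof -
  have "F x b = 0" if "b \<in> B" for b
    using \<open>x \<in> span B\<close> assms(1) by (rule span_induct) (use assms(3) that in blast)
  with \<open>y \<in> span B\<close> assms(2) show ?thesis
    by (rule span_induct)
qed

locale weakly_restricted_poisson_algebra =
  fixes scale :: "'k::field \<Rightarrow> 'a::comm_ring \<Rightarrow> 'a"
    and br :: "'a \<Rightarrow> 'a \<Rightarrow> 'a" and sq :: "'a \<Rightarrow> 'a"
  assumes weakly_restricted: "weakly_restricted_poisson scale br sq"
begin

sublocale vector_space scale
  using weakly_restricted
  by (simp add: weakly_restricted_poisson_def poisson_algebra_def comm_algebra_def)

lemma lie_algebra: "lie_algebra scale br"
  using weakly_restricted by (simp add: weakly_restricted_poisson_def poisson_algebra_def)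

lemma scale_mult_left: "scale c x * y = scale c (x * y)"
  using weakly_restricted
  by (simp add: weakly_restricted_poisson_def poisson_algebra_def comm_algebra_def)

lemma scale_mult_right: "x * scale c y = scale c (x * y)"
  using scale_mult_left[of c y x] by (simp add: mult.commute)

lemma br_add_left: "br (x + y) z = br x z + br y z"
  and br_add_right: "br x (y + z) = br x y + br x z"
  and br_scale_left: "br (scale c x) y = scale c (br x y)"
  and br_self: "br x x = 0"
  using lie_algebra by (simp_all add: lie_algebra_def)

lemma br_mult_left: "br (x * y) z = x * br y z + y * br x z"
  using weakly_restricted by (simp add: weakly_restricted_poisson_def poisson_algebra_def)

lemma sq_scale: "sq (scale c x) = scale (c ^ 2) (sq x)"
  and sq_add: "sq (x + y) = sq x + sq y + br x y"
  using weakly_restricted by (simp_all add: weakly_restricted_poisson_def restricted_lie_def)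

lemma restriction_defect_scale_left:
  "restriction_defect br sq (scale c x) y = scale (c ^ 2) (restriction_defect br sq x y)"
  by (simp add: restriction_defect_def scale_mult_left scale_mult_right sq_scale br_scale_left
      scale_right_diff_distrib scale_right_distrib power2_eq_square mult.assoc)

end

locale char2_weakly_restricted_poisson_algebra =
  weakly_restricted_poisson_algebra scale br sq
  for scale :: "'k::field \<Rightarrow> 'a::comm_ring \<Rightarrow> 'a" and br sq +
  assumes char2: "CHAR('k) = 2"
begin

lemma br_commute: "br x y = br y x"
  using lie_algebra_br_antisym[OF lie_algebra] uminus_eq_self[OF char2] by metis

lemma restriction_defect_char2:
  "restriction_defect br sq x y = sq (x * y) + (x * x) * sq y + (y * y) * sq x + x * y * br x y"
  using uminus_eq_self[OF char2] by (simp add: restriction_defect_def add.assoc)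

lemma restriction_defect_commute: "restriction_defect br sq x y = restriction_defect br sq y x"
  by (simp add: restriction_defect_def br_commute[of x y] mult.commute[of x y] add_ac)

lemma br_mult_mult_right:
  "br (x1 * y) (x2 * y) = x1 * y * br x2 y + x2 * y * br x1 y + y * y * br x1 x2"
proof -
  have "br y (x2 * y) = y * br x2 y"
    using br_mult_left[of x2 y y] by (simp add: br_commute br_self)
  moreover have "br x1 (x2 * y) = x2 * br x1 y + y * br x1 x2"
    using br_mult_left[of x2 y x1] by (simp add: br_commute)
  ultimately show ?thesis
    using br_mult_left[of x1 y "x2 * y"] by (simp add: distrib_left ac_simps)
qed

lemma restriction_defect_add_left:
  "restriction_defect br sq (x1 + x2) y = restriction_defect br sq x1 y + restriction_defect br sq x2 y"
proof -
  have cancel: "a + (a + b) = b" for a b :: 'a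
    by (simp add: add.assoc[symmetric] add_self_eq_0[OF char2])
  show ?thesis
    by (simp add: restriction_defect_char2 distrib_left distrib_right sq_add br_mult_mult_right
        br_add_left ac_simps add_self_eq_0[OF char2] cancel)
qed

lemma subspace_restriction_defect_eq_0: "subspace {x. restriction_defect br sq x y = 0}"
proof -
  have "restriction_defect br sq 0 y = 0"
    using restriction_defect_scale_left[of 0 x y for x] by simp
  then show ?thesis
    by (simp add: subspace_def restriction_defect_add_left restriction_defect_scale_left)
qed

lemma subspace_restriction_defect_eq_0_right: "subspace {y. restriction_defect br sq x y = 0}"
  using subspace_restriction_defect_eq_0[of x] by (simp add: restriction_defect_commute)

end

theorem mainTheorem9:
  fixes scale :: "'k::field \<Rightarrow> 'a::comm_ring \<Rightarrow> 'a"
    and br :: "'a \<Rightarrow> 'a \<Rightarrow> 'a" and sq :: "'a \<Rightarrow> 'a" and B :: "'a set"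
  assumes "CHAR('k) = 2"
    and "weakly_restricted_poisson scale br sq"
    and "\<not> module.dependent scale B"
    and "module.span scale B = UNIV"
  shows "restricted_poisson scale br sq \<longleftrightarrow>
    (\<forall>x\<in>B. \<forall>y\<in>B. sq (x * y) = (x * x) * sq y + (y * y) * sq x + x * y * br x y)"
proof
  assume "restricted_poisson scale br sq"
  then show "\<forall>x\<in>B. \<forall>y\<in>B. sq (x * y) = (x * x) * sq y + (y * y) * sq x + x * y * br x y"
    by (simp add: restricted_poisson_def)
next
  interpret char2_weakly_restricted_poisson_algebra scale br sq
    using assms(1,2) by unfold_locales
  assume on_basis: "\<forall>x\<in>B. \<forall>y\<in>B. sq (x * y) = (x * x) * sq y + (y * y) * sq x + x * y * br x y"
  have "restriction_defect br sq x y = 0" for x y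
  proof (rule vanishing_on_span[where F = "restriction_defect br sq" and B = B])
    show "restriction_defect br sq x y = 0" if "x \<in> B" "y \<in> B" for x y
      using that on_basis by (simp add: restriction_defect_eq_0_iff)
  qed (simp_all add: subspace_restriction_defect_eq_0 subspace_restriction_defect_eq_0_right assms(4))
  then show "restricted_poisson scale br sq"
    using assms(2) by (simp add: restricted_poisson_def restriction_defect_eq_0_iff)
qed

end
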